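(* Let $0<q<1$, let $\alpha\ge0$ and $k\ge1$ be integers, and let $0<z<q^{2k}$. Then \[ M_k(z;\alpha,q)=\frac{[k+\alpha]_{q^2}!}{[\alpha]_{q^2}!}\,\frac{(z;q^{-2})_k}{(zq^2;q^2)_k}\,q^{-\alpha k}\, B_k\big(0;q^{2\alpha},q^{-2\alpha},z^{-1};q^2\big), \] where \[ B_k\big(0;q^{2\alpha},q^{-2\alpha},z^{-1};q^2\big)={}_3\phi_2\!\left(\begin{matrix}q^{-2k},\,q^{2k+2},\,0\\ q^{2\alpha+2},\,z^{-1}q^2\end{matrix};q^2,\,q^2\right) \] is the Big $q$-Jacobi polynomial $B_n(x;a,b,c;p)={}_3\phi_2\!\left(\begin{smallmatrix}p^{-n},\,abp^{n+1},\,x\\ ap,\,cp\end{smallmatrix};p,p\right)$ with $n=k$, $x=0$, $a=q^{2\alpha}$, $b=q^{-2\alpha}$, $c=z^{-1}$, $p=q^2$.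
   Context: Notation: $(a;q)_n=\prod_{i=0}^{n-1}(1-aq^i)$ (with $(a;q)_0=1$); $[n]_p=(1-p^n)/(1-p)$, $[n]_p!=\prod_{i=1}^n[i]_p$; ${}_3\phi_2\!\left(\begin{smallmatrix}a_1,a_2,a_3\\ b_1,b_2\end{smallmatrix};p,w\right)=\sum_{i\ge0}\frac{(a_1;p)_i(a_2;p)_i(a_3;p)_i}{(b_1;p)_i(b_2;p)_i(p;p)_i}w^i$. $M_k(z;\alpha,q):=\sum_{N\ge1}M_\alpha(k,N)\,N\,z^{N-1}(1-z)^2$, where $M_\alpha(k,N)$ is the $k$-th moment of the normalised one-point function of the discrete $q$-Laguerre ensemble with parameter $\alpha$, understood as given by \[ M_\alpha(k,N)=\frac{q^{k(2-2N-\alpha)}}{N(1-q^2)^k}\frac{(q^{2N};q^2)_k(q^{2N+2\alpha};q^2)_k}{(q^2;q^2)_k}\sum_{l=0}^{k-1}\frac{(q^{2-2k};q^2)_l(q^{2-2N};q^2)_l(q^{2-2N-2\alpha};q^2)_l}{(q^{2-2N-2k};q^2)_l(q^{2-2N-2\alpha-2k};q^2)_l(q^2;q^2)_l}q^{-2kl} \] (the formula obtained from the Morozov–Popolitov–Shakirov Schur-expectation formula for this ensemble). *)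

theory Defs
  imports Complex_Main
begin

definition qpoch :: "real \<Rightarrow> real \<Rightarrow> nat \<Rightarrow> real" where
  "qpoch a p n = (\<Prod>i<n. 1 - a * p ^ i)"

definition qint :: "real \<Rightarrow> nat \<Rightarrow> real" where
  "qint p n = (1 - p ^ n) / (1 - p)"

definition qfact :: "real \<Rightarrow> nat \<Rightarrow> real" where
  "qfact p n = (\<Prod>i=1..n. qint p i)"

definition phi32 :: "real \<Rightarrow> real \<Rightarrow> real \<Rightarrow> real \<Rightarrow> real \<Rightarrow> real \<Rightarrow> real \<Rightarrow> real" where
  "phi32 a1 a2 a3 b1 b2 p w =
     (\<Sum>i. qpoch a1 p i * qpoch a2 p i * qpoch a3 p i
           / (qpoch b1 p i * qpoch b2 p i * qpoch p p i) * w ^ i)"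

definition bigqJacobi :: "nat \<Rightarrow> real \<Rightarrow> real \<Rightarrow> real \<Rightarrow> real \<Rightarrow> real \<Rightarrow> real" where
  "bigqJacobi n x a b c p = phi32 (p powi (- int n)) (a * b * p ^ (n + 1)) x (a * p) (c * p) p p"

text \<open>k-th moment M_alpha(k,N) of the discrete q-Laguerre ensemble (MPS formula).\<close>
definition Mmom :: "real \<Rightarrow> nat \<Rightarrow> nat \<Rightarrow> nat \<Rightarrow> real" where
  "Mmom q \<alpha> k N =
     q powi (int k * (2 - 2 * int N - int \<alpha>)) / (real N * (1 - q\<^sup>2) ^ k)
     * qpoch (q ^ (2 * N)) (q\<^sup>2) k * qpoch (q ^ (2 * N + 2 * \<alpha>)) (q\<^sup>2) k / qpoch (q\<^sup>2) (q\<^sup>2) k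
     * (\<Sum>l<k. qpoch (q powi (2 - 2 * int k)) (q\<^sup>2) l
                 * qpoch (q powi (2 - 2 * int N)) (q\<^sup>2) l
                 * qpoch (q powi (2 - 2 * int N - 2 * int \<alpha>)) (q\<^sup>2) l
               / (qpoch (q powi (2 - 2 * int N - 2 * int k)) (q\<^sup>2) l
                  * qpoch (q powi (2 - 2 * int N - 2 * int \<alpha> - 2 * int k)) (q\<^sup>2) l
                  * qpoch (q\<^sup>2) (q\<^sup>2) l)
               * q powi (- 2 * int k * int l))"

definition Mgen :: "nat \<Rightarrow> real \<Rightarrow> nat \<Rightarrow> real \<Rightarrow> real" where
  "Mgen k z \<alpha> q = (\<Sum>n. Mmom q \<alpha> k (n + 1) * real (n + 1) * z ^ n * (1 - z)\<^sup>2)"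

end

theory Submission
  imports Defs
begin

text \<open>
  Write \<open>p = q\<^sup>2\<close> and \<open>a = p ^ \<alpha>\<close>. The reflection formula
  \<open>(y;p)_k (p/y;p)_l = p^(kl) (y/p^l;p)_k (p/(y p^k);p)_l\<close> turns the
  Morozov--Popolitov--Shakirov formula into \<open>N M(k,N) = C \<Sum>_{l<k} c_l K(p^(N-l))\<close>, where
  \<open>c_l\<close> are the coefficients of the terminating q-binomial theorem and
  \<open>K(x) = (x;p)_k (a x;p)_k / x^k\<close>; since \<open>K(p^(N-l)) = 0\<close> for \<open>N \<le> l\<close>, the
  generating function factorises into \<open>(z p^(1-k);p)_(k-1)\<close> times \<open>\<Sum>_n K(p^(n+1)) z^n\<close>.
  Expanding \<open>(a p^(n+1);p)_k\<close> by the q-binomial theorem and summing the q-binomial series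
  \<open>\<Sum>_m [m+k, k]_p w^m = 1/(w;p)_(k+1)\<close> leaves a finite sum over \<open>r \<le> k\<close> of
  rational functions of \<open>z\<close>. On the other side, expanding the \<open>(a p;p)\<close>-symbols of the
  terminating 3phi2 and exchanging the two sums writes the Big q-Jacobi polynomial as a
  combination of terminating 2phi1-series at argument \<open>p\<close>, which q-Chu--Vandermonde
  evaluates; the two finite sums agree term by term.
\<close>

lemma power_int_eq_divide: "(q::real) \<noteq> 0 \<Longrightarrow> e = int m - int n \<Longrightarrow> q powi e = q ^ m / q ^ n"
  by (simp add: power_int_diff)

lemma power_int_even_eq_divide:
  "(q::real) \<noteq> 0 \<Longrightarrow> e = 2 * int m - 2 * int n \<Longrightarrow> q powi e = (q\<^sup>2) ^ m / (q\<^sup>2) ^ n"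
  using power_int_eq_divide[of q e "2 * m" "2 * n"] by (simp add: power_mult)

section \<open>q-Pochhammer symbols\<close>

lemma qpoch_0 [simp]: "qpoch a p 0 = 1"
  by (simp add: qpoch_def)

lemma qpoch_Suc: "qpoch a p (Suc n) = qpoch a p n * (1 - a * p ^ n)"
  by (simp add: qpoch_def)

lemma qpoch_add: "qpoch a p (m + n) = qpoch a p m * qpoch (a * p ^ m) p n"
  by (induction n) (simp_all add: qpoch_Suc power_add mult.assoc)

lemma qpoch_Suc_left: "qpoch a p (Suc n) = (1 - a) * qpoch (a * p) p n"
  using qpoch_add[of a p 1 n] by (simp add: qpoch_def)

lemma qpoch_nonzero: "(\<And>j. j < n \<Longrightarrow> a * p ^ j \<noteq> 1) \<Longrightarrow> qpoch a p n \<noteq> 0"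
  by (auto simp: qpoch_def)

lemma qpoch_pos: "(\<And>j. j < n \<Longrightarrow> a * p ^ j < 1) \<Longrightarrow> qpoch a p n > 0"
  unfolding qpoch_def by (intro prod_pos) auto

lemma qpoch_eq_0: "j < n \<Longrightarrow> a * p ^ j = 1 \<Longrightarrow> qpoch a p n = 0"
  unfolding qpoch_def by (intro prod_zero) auto

lemma qpoch_self_pos: "0 < p \<Longrightarrow> p < 1 \<Longrightarrow> qpoch p p n > 0"
  by (rule qpoch_pos) (metis mult.commute power_Suc power_Suc_less_one)

lemma qpoch_reflection_step:
  assumes "u \<noteq> 0" "p \<noteq> 0"
  shows "p ^ k * qpoch u p k * (1 - 1 / (u * p ^ k)) = qpoch (u * p) p k * (1 - 1 / u)"
proof (cases k)
  case (Suc k')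
  have A: "qpoch u p k = (1 - u) * qpoch (u * p) p k'"
    using Suc by (simp add: qpoch_Suc_left)
  have B: "qpoch (u * p) p k = qpoch (u * p) p k' * (1 - u * p * p ^ k')"
    using Suc by (simp add: qpoch_Suc)
  show ?thesis unfolding A B using assms Suc by (simp add: field_simps)
qed simp

lemma qpoch_reflection:
  assumes "y \<noteq> 0" "p \<noteq> 0"
  shows "qpoch y p k * qpoch (p / y) p l
    = p ^ (k * l) * qpoch (y / p ^ l) p k * qpoch (p / (y * p ^ k)) p l"
proof (induction l)
  case (Suc l)
  define u where "u = y / p ^ Suc l"
  have u: "u \<noteq> 0" "u * p = y / p ^ l" "1 / u = p / y * p ^ l"
    "1 / (u * p ^ k) = p / (y * p ^ k) * p ^ l"
    using assms unfolding u_def by (simp_all add: field_simps)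
  have "p ^ (k * Suc l) * qpoch (y / p ^ Suc l) p k * qpoch (p / (y * p ^ k)) p (Suc l)
      = p ^ (k * l) * (p ^ k * qpoch u p k * (1 - 1 / (u * p ^ k))) * qpoch (p / (y * p ^ k)) p l"
    unfolding qpoch_Suc u_def[symmetric] u(4)[symmetric] by (simp add: power_add algebra_simps)
  also have "\<dots> = p ^ (k * l) * (qpoch (u * p) p k * (1 - 1 / u)) * qpoch (p / (y * p ^ k)) p l"
    by (simp only: qpoch_reflection_step[OF u(1) assms(2)])
  also have "\<dots> = p ^ (k * l) * qpoch (y / p ^ l) p k * qpoch (p / (y * p ^ k)) p l
      * (1 - p / y * p ^ l)"
    by (simp only: u(2,3)) (simp add: algebra_simps)
  also have "\<dots> = qpoch y p k * qpoch (p / y) p (Suc l)"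
    unfolding Suc.IH[symmetric] qpoch_Suc by simp
  finally show ?case by simp
qed simp

lemma qpoch_reflection_quotient:
  assumes "y \<noteq> 0" "p \<noteq> 0" "qpoch (p / (y * p ^ k)) p l \<noteq> 0"
  shows "qpoch y p k * qpoch (p / y) p l / qpoch (p / (y * p ^ k)) p l
    = p ^ (k * l) * qpoch (y / p ^ l) p k"
  using qpoch_reflection[OF assms(1,2), of k l] assms(3) by simp

lemma qpoch_inverse_base:
  assumes "p \<noteq> 0"
  shows "qpoch x (1 / p) n = qpoch (x * p / p ^ n) p n"
proof -
  have "qpoch (x * p / p ^ n) p n = (\<Prod>i<n. 1 - x * p / p ^ n * p ^ (n - Suc i))"
    unfolding qpoch_def by (rule prod.nat_diff_reindex[symmetric])
  also have "\<dots> = qpoch x (1 / p) n"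
    unfolding qpoch_def
  proof (rule prod.cong[OF refl])
    fix i assume "i \<in> {..<n}"
    then have "p ^ n = p ^ i * (p * p ^ (n - Suc i))"
      by (simp flip: power_add power_Suc)
    then show "1 - x * p / p ^ n * p ^ (n - Suc i) = 1 - x * (1 / p) ^ i"
      using assms by (simp add: power_one_over field_simps)
  qed
  finally show ?thesis ..
qed

lemma prod_diff_mult_qpoch_inverse_base:
  assumes "c \<noteq> 0" "p \<noteq> 0"
  shows "(\<Prod>j<n. b - c * p ^ j) * qpoch (1 / c) (1 / p) n = qpoch c p n * qpoch (b / c) (1 / p) n"
  unfolding qpoch_def prod.distrib[symmetric]
  by (rule prod.cong[OF refl]) (use assms in \<open>simp add: power_one_over field_simps\<close>)

lemma qfact_eq_qpoch: "p \<noteq> 1 \<Longrightarrow> qfact p n = qpoch p p n / (1 - p) ^ n"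
proof (induction n)
  case (Suc n)
  have "qfact p (Suc n) = qfact p n * qint p (Suc n)"
    unfolding qfact_def by (simp add: prod.nat_ivl_Suc')
  then show ?case using Suc by (simp add: qint_def qpoch_Suc field_simps)
qed (simp add: qfact_def)

lemma qfact_quotient:
  assumes "0 < p" "p < 1"
  shows "qfact p (k + \<alpha>) / qfact p \<alpha> = qpoch (p ^ \<alpha> * p) p k / (1 - p) ^ k"
proof -
  have "qpoch p p (\<alpha> + k) = qpoch p p \<alpha> * qpoch (p ^ \<alpha> * p) p k"
    using qpoch_add[of p p \<alpha> k] by (simp add: mult.commute)
  with qpoch_self_pos[OF assms, of \<alpha>] assms show ?thesis
    by (simp add: qfact_eq_qpoch add.commute power_add field_simps)
qed

section \<open>The terminating q-binomial theorem and q-Chu--Vandermonde\<close>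

definition qbinom_coeff :: "nat \<Rightarrow> nat \<Rightarrow> real \<Rightarrow> real" where
  "qbinom_coeff n l p = qpoch (1 / p ^ n) p l / qpoch p p l"

lemma qbinom_coeff_0 [simp]: "qbinom_coeff n 0 p = 1"
  by (simp add: qbinom_coeff_def)

lemma qbinom_coeff_eq_0: "0 < p \<Longrightarrow> n < l \<Longrightarrow> qbinom_coeff n l p = 0"
  unfolding qbinom_coeff_def by (subst qpoch_eq_0[of n]) auto

lemma qbinom_coeff_Suc_Suc:
  assumes "0 < p" "p < 1"
  shows "qbinom_coeff (Suc n) (Suc l) p = qbinom_coeff n (Suc l) p - qbinom_coeff n l p / p ^ Suc n"
    and "qbinom_coeff (Suc n) (Suc l) p = (qbinom_coeff n (Suc l) p - qbinom_coeff n l p)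
        / p ^ Suc l"
proof -
  have A: "qpoch (1 / p ^ Suc n) p (Suc l) = (1 - 1 / p ^ Suc n) * qpoch (1 / p ^ n) p l"
    using assms by (simp add: qpoch_Suc_left)
  have B: "qpoch (1 / p ^ n) p (Suc l) = qpoch (1 / p ^ n) p l * (1 - p ^ l / p ^ n)"
    and C: "qpoch p p (Suc l) = qpoch p p l * (1 - p ^ Suc l)"
    by (simp_all add: qpoch_Suc)
  have "qpoch p p l > 0" "1 - p ^ Suc l > 0"
    using assms qpoch_self_pos power_Suc_less_one[OF assms] by auto
  then show "qbinom_coeff (Suc n) (Suc l) p = qbinom_coeff n (Suc l) p
        - qbinom_coeff n l p / p ^ Suc n"
    and "qbinom_coeff (Suc n) (Suc l) p = (qbinom_coeff n (Suc l) p - qbinom_coeff n l p)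
        / p ^ Suc l"
    using assms unfolding qbinom_coeff_def A B C by (simp_all add: field_simps)
qed

theorem qbinomial_terminating:
  assumes "0 < p" "p < 1"
  shows "(\<Sum>l\<le>n. qbinom_coeff n l p * t ^ l) = qpoch (t / p ^ n) p n"
proof (induction n)
  case (Suc n)
  have "(\<Sum>l\<le>Suc n. qbinom_coeff (Suc n) l p * t ^ l)
      = 1 + (\<Sum>l\<le>n. qbinom_coeff (Suc n) (Suc l) p * t ^ Suc l)"
    by (subst sum.atMost_Suc_shift) simp
  also have "\<dots> = (1 + (\<Sum>l\<le>n. qbinom_coeff n (Suc l) p * t ^ Suc l))
       - t / p ^ Suc n * (\<Sum>l\<le>n. qbinom_coeff n l p * t ^ l)"
    by (simp add: qbinom_coeff_Suc_Suc(1)[OF assms] algebra_simps sum_subtractf sum_distrib_left)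
  also have "1 + (\<Sum>l\<le>n. qbinom_coeff n (Suc l) p * t ^ Suc l)
      = (\<Sum>l\<le>Suc n. qbinom_coeff n l p * t ^ l)"
    by (subst sum.atMost_Suc_shift) simp
  also have "\<dots> = (\<Sum>l\<le>n. qbinom_coeff n l p * t ^ l)"
    using qbinom_coeff_eq_0[OF assms(1), of n "Suc n"] by simp
  finally show ?case using Suc assms by (simp add: qpoch_Suc_left field_simps)
qed simp

lemma qbinomial_terminating_lessThan:
  assumes "0 < p" "p < 1" "1 \<le> k"
  shows "(\<Sum>l<k. qbinom_coeff (k - 1) l p * t ^ l) = qpoch (t / p ^ (k - 1)) p (k - 1)"
proof -
  have "{..<k} = {..k - 1}"
    using assms(3) by auto
  then show ?thesis
    using qbinomial_terminating[OF assms(1,2)] by simp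
qed

lemma qpoch_times_qbinom_coeff:
  assumes "0 < p" "i \<le> k" "r \<le> k"
  shows "qpoch (1 / p ^ k) p i * qbinom_coeff (k - i) r p
    = qbinom_coeff k r p * qpoch (1 / p ^ (k - r)) p i"
proof -
  have "1 / p ^ k * p ^ i = 1 / p ^ (k - i)" "1 / p ^ k * p ^ r = 1 / p ^ (k - r)"
    using assms by (simp_all add: power_diff)
  then have "qpoch (1 / p ^ k) p i * qpoch (1 / p ^ (k - i)) p r
      = qpoch (1 / p ^ k) p r * qpoch (1 / p ^ (k - r)) p i"
    using qpoch_add[of "1 / p ^ k" p i r] qpoch_add[of "1 / p ^ k" p r i] by (simp add: add.commute)
  then show ?thesis unfolding qbinom_coeff_def by simp
qed

theorem q_Chu_Vandermonde:
  assumes "0 < p" "p < 1"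
  shows "(\<Sum>i\<le>n. qbinom_coeff n i p * qpoch b p i * qpoch (c * p ^ i) p (n - i) * p ^ i)
    = (\<Prod>j<n. b - c * p ^ j)"
proof (induction n arbitrary: c)
  case (Suc n)
  define A where "A = (\<Sum>i\<le>Suc n. qbinom_coeff n i p * qpoch b p i
      * qpoch (c * p ^ i) p (Suc n - i))"
  define B where "B = (\<Sum>i\<le>n. qbinom_coeff n i p * qpoch b p (Suc i)
      * qpoch (c * p ^ Suc i) p (n - i))"
  have "(\<Sum>i\<le>Suc n. qbinom_coeff (Suc n) i p * qpoch b p i * qpoch (c * p ^ i) p (Suc n - i) * p ^ i)
      = qpoch c p (Suc n) + (\<Sum>i\<le>n. (qbinom_coeff n (Suc i) p - qbinom_coeff n i p)
          * qpoch b p (Suc i) * qpoch (c * p ^ Suc i) p (n - i))"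
    using assms by (subst sum.atMost_Suc_shift) (simp add: qbinom_coeff_Suc_Suc(2))
  also have "\<dots> = A - B"
    unfolding A_def B_def by (subst sum.atMost_Suc_shift) (simp add: algebra_simps sum_subtractf)
  also have "A = (\<Sum>i\<le>n. qbinom_coeff n i p * qpoch b p i
        * ((1 - c * p ^ i) * qpoch (c * p ^ Suc i) p (n - i)))"
    using qbinom_coeff_eq_0[OF assms(1), of n "Suc n"] unfolding A_def
    by (auto intro!: sum.cong simp: Suc_diff_le qpoch_Suc_left
        mult.assoc mult.commute[of "p ^ _" p])
  also have "B = (\<Sum>i\<le>n. qbinom_coeff n i p * qpoch b p i
        * ((1 - b * p ^ i) * qpoch (c * p ^ Suc i) p (n - i)))"
    unfolding B_def by (simp add: qpoch_Suc mult.assoc)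
  also have "(\<Sum>i\<le>n. qbinom_coeff n i p * qpoch b p i
        * ((1 - c * p ^ i) * qpoch (c * p ^ Suc i) p (n - i)))
      - (\<Sum>i\<le>n. qbinom_coeff n i p * qpoch b p i
          * ((1 - b * p ^ i) * qpoch (c * p ^ Suc i) p (n - i)))
      = (b - c) * (\<Sum>i\<le>n. qbinom_coeff n i p * qpoch b p i
          * qpoch (c * p * p ^ i) p (n - i) * p ^ i)"
    unfolding sum_subtractf[symmetric] sum_distrib_left
    by (rule sum.cong[OF refl]) (simp add: algebra_simps)
  also have "\<dots> = (\<Prod>j<Suc n. b - c * p ^ j)"
    using Suc.IH[of "c * p"] by (subst prod.lessThan_Suc_shift) (simp add: mult.assoc)
  finally show ?case .
qed simp

theorem q_Chu_Vandermonde_sum: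
  assumes "0 < p" "p < 1" "qpoch c p n \<noteq> 0"
  shows "(\<Sum>i\<le>n. qpoch (1 / p ^ n) p i * qpoch b p i / (qpoch c p i * qpoch p p i) * p ^ i)
    = (\<Prod>j<n. b - c * p ^ j) / qpoch c p n"
proof -
  have "(\<Sum>i\<le>n. qpoch (1 / p ^ n) p i * qpoch b p i / (qpoch c p i * qpoch p p i) * p ^ i)
      = (\<Sum>i\<le>n. qbinom_coeff n i p * qpoch b p i
          * qpoch (c * p ^ i) p (n - i) * p ^ i) / qpoch c p n"
    unfolding sum_divide_distrib
  proof (rule sum.cong[OF refl])
    fix i assume "i \<in> {..n}"
    then have split: "qpoch c p n = qpoch c p i * qpoch (c * p ^ i) p (n - i)"
      using qpoch_add[of c p i "n - i"] by simp
    then have "qpoch c p i \<noteq> 0" "qpoch (c * p ^ i) p (n - i) \<noteq> 0"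
      using assms(3) by auto
    then show "qpoch (1 / p ^ n) p i * qpoch b p i / (qpoch c p i * qpoch p p i) * p ^ i
        = qbinom_coeff n i p * qpoch b p i * qpoch (c * p ^ i) p (n - i) * p ^ i / qpoch c p n"
      unfolding split qbinom_coeff_def using qpoch_self_pos[OF assms(1,2), of i]
      by (simp add: field_simps)
  qed
  then show ?thesis
    unfolding q_Chu_Vandermonde[OF assms(1,2)] .
qed

section \<open>The q-binomial series\<close>

text \<open>The Gaussian binomial coefficient \<open>[m + k, k]_p\<close>.\<close>

definition qbinom_series_coeff :: "nat \<Rightarrow> nat \<Rightarrow> real \<Rightarrow> real" where
  "qbinom_series_coeff k m p = qpoch (p ^ Suc m) p k / qpoch p p k"

lemma qbinom_series_coeff_nonneg: "0 < p \<Longrightarrow> p < 1 \<Longrightarrow> qbinom_series_coeff k m p \<ge> 0"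
  unfolding qbinom_series_coeff_def
  by (intro divide_nonneg_pos less_imp_le qpoch_pos qpoch_self_pos)
     (auto simp del: power_Suc simp: power_add[symmetric] intro!: power_Suc_less_one)

lemma qbinom_series_coeff_0 [simp]: "0 < p \<Longrightarrow> p < 1 \<Longrightarrow> qbinom_series_coeff k 0 p = 1"
  unfolding qbinom_series_coeff_def using qpoch_self_pos[of p k] by simp

lemma qbinom_series_coeff_Suc_Suc:
  assumes "0 < p" "p < 1"
  shows "qbinom_series_coeff (Suc k) (Suc m) p
    = qbinom_series_coeff k (Suc m) p + p ^ Suc k * qbinom_series_coeff (Suc k) m p"
proof -
  have A: "qpoch (p ^ Suc (Suc m)) p (Suc k)
      = qpoch (p ^ Suc (Suc m)) p k * (1 - p ^ Suc (Suc m) * p ^ k)"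
    and B: "qpoch p p (Suc k) = qpoch p p k * (1 - p ^ Suc k)"
    by (simp_all add: qpoch_Suc)
  have C: "qpoch (p ^ Suc m) p (Suc k) = (1 - p ^ Suc m) * qpoch (p ^ Suc (Suc m)) p k"
    by (simp add: qpoch_Suc_left mult.commute)
  have "qpoch p p k > 0" "1 - p ^ Suc k > 0"
    using assms qpoch_self_pos power_Suc_less_one[OF assms] by auto
  then show ?thesis unfolding qbinom_series_coeff_def A B C by (simp add: field_simps)
qed

lemma qbinom_series_coeff_Suc:
  assumes "0 < p" "p < 1"
  shows "qbinom_series_coeff (Suc k) m p
    = (\<Sum>j\<le>m. qbinom_series_coeff k j p * (p ^ Suc k) ^ (m - j))"
proof (induction m)
  case (Suc m)
  have "(\<Sum>j\<le>m. qbinom_series_coeff k j p * (p ^ Suc k) ^ (Suc m - j))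
      = p ^ Suc k * (\<Sum>j\<le>m. qbinom_series_coeff k j p * (p ^ Suc k) ^ (m - j))"
    unfolding sum_distrib_left by (rule sum.cong[OF refl]) (simp add: Suc_diff_le algebra_simps)
  then show ?case using Suc assms by (simp add: qbinom_series_coeff_Suc_Suc)
qed (use assms in simp)

theorem qbinom_series_sums:
  assumes "0 < p" "p < 1" "0 \<le> t" "t < 1"
  shows "(\<lambda>m. qbinom_series_coeff k m p * t ^ m) sums (1 / qpoch t p (Suc k))"
proof (induction k)
  case 0
  have "qbinom_series_coeff 0 m p = 1" for m
    unfolding qbinom_series_coeff_def by simp
  then show ?case using geometric_sums[of t] assms by (simp add: qpoch_def)
next
  case (Suc k)
  define a where "a i = qbinom_series_coeff k i p * t ^ i" for i
  define b where "b i = (p ^ Suc k * t) ^ i" for i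
  have "p ^ Suc k < 1" "0 < p ^ Suc k"
    using assms power_Suc_less_one[OF assms(1,2)] by (auto simp del: power_Suc)
  then have pt: "0 \<le> p ^ Suc k * t" "p ^ Suc k * t < 1"
    using assms by (auto simp del: power_Suc intro: le_less_trans[OF mult_left_le_one_le])
  have sa: "a sums (1 / qpoch t p (Suc k))"
    using Suc unfolding a_def .
  have sb: "b sums (1 / (1 - p ^ Suc k * t))"
    unfolding b_def using pt by (intro geometric_sums) auto
  have "summable (\<lambda>i. norm (a i))"
    using sa assms qbinom_series_coeff_nonneg[OF assms(1,2)]
      unfolding a_def by (simp add: sums_summable)
  moreover have "summable (\<lambda>i. norm (b i))"
    using sb pt unfolding b_def by (simp add: sums_summable)
  ultimately have "(\<lambda>m. \<Sum>i\<le>m. a i * b (m - i)) sums (suminf a * suminf b)"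
    by (rule Cauchy_product_sums)
  moreover have "(\<Sum>i\<le>m. a i * b (m - i)) = qbinom_series_coeff (Suc k) m p * t ^ m" for m
  proof -
    have "(\<Sum>i\<le>m. a i * b (m - i))
        = (\<Sum>i\<le>m. qbinom_series_coeff k i p * (p ^ Suc k) ^ (m - i) * t ^ m)"
      unfolding a_def b_def
      by (rule sum.cong[OF refl]) (simp add: power_mult_distrib power_add[symmetric])
    then show ?thesis
      using qbinom_series_coeff_Suc[OF assms(1,2)] by (simp add: sum_distrib_right)
  qed
  moreover have "suminf a * suminf b = 1 / qpoch t p (Suc (Suc k))"
    using sa sb by (simp add: sums_iff qpoch_Suc mult.commute)
  ultimately show ?case by simp
qed

section \<open>The moments as combinations of one kernel\<close>

lemma qpoch_reflected_nonzero:
  assumes "0 < p" "p < 1" "0 < a" "a \<le> 1" "1 \<le> N" "l < k"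
  shows "qpoch (p / (a * p ^ N * p ^ k)) p l \<noteq> 0"
proof (rule qpoch_nonzero)
  fix j assume "j < l"
  with assms have "p ^ (N + k) < p * p ^ j"
    using power_strict_decreasing[of "Suc j" "N + k" p] by simp
  moreover have "a * p ^ (N + k) \<le> p ^ (N + k)"
    using assms by (simp add: mult_left_le_one_le)
  ultimately have "a * p ^ (N + k) < p * p ^ j"
    by linarith
  then show "p / (a * p ^ N * p ^ k) * p ^ j \<noteq> 1"
    using assms by (simp add: power_add field_simps)
qed

text \<open>The left-hand side is the \<open>l\<close>-th Morozov--Popolitov--Shakirov summand together with
  its \<open>N\<close>-dependent prefactor, in base \<open>p = q\<^sup>2\<close> and with \<open>a = q\<^bsup>2\<alpha>\<^esup>\<close>.\<close>

lemma MPS_summand_reflection: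
  assumes "0 < p" "p < 1" "0 < a" "a \<le> 1" "1 \<le> N" "l < k"
  shows "qpoch (p ^ N) p k * qpoch (a * p ^ N) p k
      * (qpoch (1 / p ^ (k - 1)) p l * qpoch (p / p ^ N) p l * qpoch (p / (a * p ^ N)) p l
         / (qpoch (p / (p ^ N * p ^ k)) p l * qpoch (p / (a * p ^ N * p ^ k)) p l * qpoch p p l)
         * (1 / p ^ (k * l)))
    = qbinom_coeff (k - 1) l p * p ^ (k * l)
      * qpoch (p ^ N / p ^ l) p k * qpoch (a * p ^ N / p ^ l) p k"
proof -
  have R1: "qpoch (p ^ N) p k * qpoch (p / p ^ N) p l / qpoch (p / (p ^ N * p ^ k)) p l
      = p ^ (k * l) * qpoch (p ^ N / p ^ l) p k"
    using assms qpoch_reflected_nonzero[OF assms(1,2) _ _ assms(5,6), of 1]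
    by (intro qpoch_reflection_quotient) auto
  have R2: "qpoch (a * p ^ N) p k * qpoch (p / (a * p ^ N)) p l
      / qpoch (p / (a * p ^ N * p ^ k)) p l
      = p ^ (k * l) * qpoch (a * p ^ N / p ^ l) p k"
    using assms qpoch_reflected_nonzero[OF assms]
    by (intro qpoch_reflection_quotient) (auto simp: mult.assoc)
  have "qpoch (p ^ N) p k * qpoch (a * p ^ N) p k
      * (qpoch (1 / p ^ (k - 1)) p l * qpoch (p / p ^ N) p l * qpoch (p / (a * p ^ N)) p l
         / (qpoch (p / (p ^ N * p ^ k)) p l * qpoch (p / (a * p ^ N * p ^ k)) p l * qpoch p p l)
         * (1 / p ^ (k * l)))
    = (qpoch (p ^ N) p k * qpoch (p / p ^ N) p l / qpoch (p / (p ^ N * p ^ k)) p l)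
      * (qpoch (a * p ^ N) p k * qpoch (p / (a * p ^ N)) p l / qpoch (p / (a * p ^ N * p ^ k)) p l)
      * qbinom_coeff (k - 1) l p / p ^ (k * l)"
    unfolding qbinom_coeff_def by (simp only: divide_inverse inverse_mult_distrib mult_ac)
  also have "\<dots> = qbinom_coeff (k - 1) l p * p ^ (k * l)
      * qpoch (p ^ N / p ^ l) p k * qpoch (a * p ^ N / p ^ l) p k"
    unfolding R1 R2 using assms by simp
  finally show ?thesis .
qed

lemma Mmom_in_base_q_square:
  fixes q :: real and \<alpha> :: nat
  assumes "q \<noteq> 0" "1 \<le> k"
  defines "p \<equiv> q\<^sup>2" and "a \<equiv> (q\<^sup>2) ^ \<alpha>"
  shows "Mmom q \<alpha> k N = q powi (- int \<alpha> * int k) * (p ^ k / p ^ (N * k)) / (real N * (1 - p) ^ k)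
     * qpoch (p ^ N) p k * qpoch (a * p ^ N) p k / qpoch p p k
     * (\<Sum>l<k. qpoch (1 / p ^ (k - 1)) p l * qpoch (p / p ^ N) p l * qpoch (p / (a * p ^ N)) p l
          / (qpoch (p / (p ^ N * p ^ k)) p l * qpoch (p / (a * p ^ N * p ^ k)) p l * qpoch p p l)
          * (1 / p ^ (k * l)))"
proof -
  note even = power_int_even_eq_divide[OF assms(1), folded p_def]
  have "q powi (int k * (2 - 2 * int N - int \<alpha>))
      = q powi (- int \<alpha> * int k) * q powi (2 * int k - 2 * int (N * k))"
    by (subst power_int_add[symmetric]) (use assms(1) in \<open>simp_all add: algebra_simps\<close>)
  also have "\<dots> = q powi (- int \<alpha> * int k) * (p ^ k / p ^ (N * k))"
    by (simp only: even[OF refl])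
  finally have e0: "q powi (int k * (2 - 2 * int N - int \<alpha>))
      = q powi (- int \<alpha> * int k) * (p ^ k / p ^ (N * k))" .
  have e1: "q powi (2 - 2 * int k) = 1 / p ^ (k - 1)"
    using even[of "2 - 2 * int k" 1 k] assms(1,2) unfolding p_def by (simp add: power_diff)
  have e2: "q powi (2 - 2 * int N) = p / p ^ N"
    using even[of "2 - 2 * int N" 1 N] by simp
  have e3: "q powi (2 - 2 * int N - 2 * int \<alpha>) = p / (a * p ^ N)"
    using even[of "2 - 2 * int N - 2 * int \<alpha>" 1 "\<alpha> + N"]
    unfolding a_def p_def by (simp add: power_add)
  have e4: "q powi (2 - 2 * int N - 2 * int k) = p / (p ^ N * p ^ k)"
    using even[of "2 - 2 * int N - 2 * int k" 1 "N + k"] by (simp add: power_add)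
  have e5: "q powi (2 - 2 * int N - 2 * int \<alpha> - 2 * int k) = p / (a * p ^ N * p ^ k)"
    using even[of "2 - 2 * int N - 2 * int \<alpha> - 2 * int k"
      1 "\<alpha> + N + k"] unfolding a_def p_def by (simp add: power_add)
  have e6: "q powi (- 2 * int k * int l) = 1 / p ^ (k * l)" for l
    using even[of "- 2 * int k * int l" 0 "k * l"] by (simp add: mult.assoc)
  have q2: "q ^ (2 * N) = p ^ N" "q ^ (2 * N + 2 * \<alpha>) = a * p ^ N"
    unfolding a_def p_def by (simp_all add: power_add power_mult)
  show ?thesis
    unfolding Mmom_def e0 e1 e2 e3 e4 e5 e6 q2 p_def[symmetric] ..
qed

definition moment_kernel :: "real \<Rightarrow> real \<Rightarrow> nat \<Rightarrow> real \<Rightarrow> real" where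
  "moment_kernel p a k x = qpoch x p k * qpoch (a * x) p k / x ^ k"

lemma Mmom_eq_kernel_sum:
  fixes q :: real and \<alpha> :: nat
  assumes "0 < q" "q < 1" "1 \<le> k" "1 \<le> N"
  defines "p \<equiv> q\<^sup>2" and "a \<equiv> (q\<^sup>2) ^ \<alpha>"
  shows "real N * Mmom q \<alpha> k N = q powi (- int \<alpha> * int k) * p ^ k / ((1 - p) ^ k * qpoch p p k)
           * (\<Sum>l<k. qbinom_coeff (k - 1) l p * moment_kernel p a k (p ^ N / p ^ l))"
proof -
  have p: "0 < p" "p < 1" and a: "0 < a" "a \<le> 1"
    using assms by (auto simp: p_def a_def power_less_one_iff power_le_one)
  define T where "T l = qpoch (1 / p ^ (k - 1)) p l * qpoch (p / p ^ N) p l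
      * qpoch (p / (a * p ^ N)) p l
      / (qpoch (p / (p ^ N * p ^ k)) p l * qpoch (p / (a * p ^ N * p ^ k)) p l * qpoch p p l)
      * (1 / p ^ (k * l))" for l
  have "real N * Mmom q \<alpha> k N = q powi (- int \<alpha> * int k) * p ^ k / ((1 - p) ^ k * qpoch p p k)
      * (qpoch (p ^ N) p k * qpoch (a * p ^ N) p k * (\<Sum>l<k. T l) / p ^ (N * k))"
  proof -
    have "Mmom q \<alpha> k N = q powi (- int \<alpha> * int k) * (p ^ k / p ^ (N * k)) / (real N * (1 - p) ^ k)
        * qpoch (p ^ N) p k * qpoch (a * p ^ N) p k / qpoch p p k * (\<Sum>l<k. T l)"
      unfolding T_def p_def a_def using assms(1,3) by (intro Mmom_in_base_q_square) simp_all
    then show ?thesis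
      using assms(4) by (simp add: field_simps)
  qed
  also have "qpoch (p ^ N) p k * qpoch (a * p ^ N) p k * (\<Sum>l<k. T l) / p ^ (N * k)
      = (\<Sum>l<k. qbinom_coeff (k - 1) l p * moment_kernel p a k (p ^ N / p ^ l))"
    unfolding sum_distrib_left sum_divide_distrib
  proof (rule sum.cong[OF refl])
    fix l assume "l \<in> {..<k}"
    then have l: "l < k" by simp
    show "qpoch (p ^ N) p k * qpoch (a * p ^ N) p k * T l / p ^ (N * k)
      = qbinom_coeff (k - 1) l p * moment_kernel p a k (p ^ N / p ^ l)"
      unfolding T_def MPS_summand_reflection[OF p a assms(4) l] moment_kernel_def
      using p by (simp add: power_divide power_mult[symmetric] mult.commute)
  qed
  finally show ?thesis .
qed

section \<open>The generating function of the moments\<close>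

lemma moment_kernel_eq_0:
  assumes "0 < p" "N \<le> l" "l < k"
  shows "moment_kernel p a k (p ^ N / p ^ l) = 0"
proof -
  have "p ^ N * p ^ (l - N) = p ^ l"
    using assms by (simp flip: power_add)
  then have "qpoch (p ^ N / p ^ l) p k = 0"
    using assms by (intro qpoch_eq_0[of "l - N"]) (auto simp: field_simps)
  then show ?thesis unfolding moment_kernel_def by simp
qed

lemma moment_kernel_power_series_term:
  assumes "0 < p" "p < 1"
  shows "moment_kernel p a k (p ^ Suc n) * z ^ n
    = qpoch p p k / p ^ k * (\<Sum>r\<le>k. qbinom_coeff k r p * (a * p ^ (k + 1)) ^ r
        * (qbinom_series_coeff k n p * (z * p ^ r / p ^ k) ^ n))"
proof -
  have A: "qpoch (p ^ Suc n) p k = qbinom_series_coeff k n p * qpoch p p k"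
    unfolding qbinom_series_coeff_def using qpoch_self_pos[OF assms, of k] by simp
  have B: "qpoch (a * p ^ Suc n) p k = (\<Sum>r\<le>k. qbinom_coeff k r p * (a * p ^ Suc n * p ^ k) ^ r)"
    using qbinomial_terminating[OF assms, of k "a * p ^ Suc n * p ^ k"] assms by simp
  have C: "(a * p ^ Suc n * p ^ k) ^ r * z ^ n / (p ^ Suc n) ^ k
      = (a * p ^ (k + 1)) ^ r / p ^ k * (z * p ^ r / p ^ k) ^ n" for r
  proof -
    have "(a * p ^ Suc n * p ^ k) ^ r * z ^ n * (p ^ k * (p ^ k) ^ n)
        = (a * p ^ (k + 1)) ^ r * (z * p ^ r) ^ n * (p ^ Suc n) ^ k"
      by (simp add: power_mult_distrib power_add[symmetric] power_mult[symmetric] algebra_simps)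
    then show ?thesis using assms by (simp add: field_simps power_divide)
  qed
  have "moment_kernel p a k (p ^ Suc n) * z ^ n
      = qbinom_series_coeff k n p * qpoch p p k
        * (\<Sum>r\<le>k. qbinom_coeff k r p * ((a * p ^ Suc n * p ^ k) ^ r * z ^ n / (p ^ Suc n) ^ k))"
    unfolding moment_kernel_def A B sum_distrib_left sum_divide_distrib sum_distrib_right
    by (simp add: mult_ac)
  also have "\<dots> = qpoch p p k / p ^ k * (\<Sum>r\<le>k. qbinom_coeff k r p * (a * p ^ (k + 1)) ^ r
        * (qbinom_series_coeff k n p * (z * p ^ r / p ^ k) ^ n))"
    unfolding C sum_distrib_left by (rule sum.cong) (simp_all add: mult_ac)
  finally show ?thesis .
qed

lemma moment_kernel_power_series_sums:
  assumes "0 < p" "p < 1" "0 < z" "z < p ^ k"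
  shows "(\<lambda>n. moment_kernel p a k (p ^ Suc n) * z ^ n) sums
    (qpoch p p k / p ^ k * (\<Sum>r\<le>k. qbinom_coeff k r p * (a * p ^ (k + 1)) ^ r
        / qpoch (z * p ^ r / p ^ k) p (Suc k)))"
proof -
  have "(\<lambda>n. qbinom_series_coeff k n p * (z * p ^ r / p ^ k) ^ n)
      sums (1 / qpoch (z * p ^ r / p ^ k) p (Suc k))" for r
  proof (rule qbinom_series_sums[OF assms(1,2)])
    have "z * p ^ r \<le> z"
      using assms by (simp add: mult_left_le power_le_one)
    then have "z * p ^ r < p ^ k"
      using assms(4) by linarith
    then show "0 \<le> z * p ^ r / p ^ k" "z * p ^ r / p ^ k < 1"
      using assms by simp_all
  qed
  then have "(\<lambda>n. \<Sum>r\<le>k. qbinom_coeff k r p * (a * p ^ (k + 1)) ^ r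
        * (qbinom_series_coeff k n p * (z * p ^ r / p ^ k) ^ n))
      sums (\<Sum>r\<le>k. qbinom_coeff k r p * (a * p ^ (k + 1)) ^ r
        * (1 / qpoch (z * p ^ r / p ^ k) p (Suc k)))"
    by (intro sums_sum sums_mult)
  from sums_mult[OF this, of "qpoch p p k / p ^ k"] show ?thesis
    unfolding moment_kernel_power_series_term[OF assms(1,2)]
    by (simp only: times_divide_eq_right mult_1_right)
qed

lemma moment_kernel_shifted_sums:
  assumes "0 < p" "p < 1" "0 < z" "z < p ^ k" "l < k"
  shows "(\<lambda>n. moment_kernel p a k (p ^ Suc n / p ^ l) * z ^ n) sums
    (z ^ l * (qpoch p p k / p ^ k * (\<Sum>r\<le>k. qbinom_coeff k r p * (a * p ^ (k + 1)) ^ r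
        / qpoch (z * p ^ r / p ^ k) p (Suc k))))"
proof -
  define f where "f n = moment_kernel p a k (p ^ Suc n / p ^ l) * z ^ n" for n
  have "f (n + l) = z ^ l * (moment_kernel p a k (p ^ Suc n) * z ^ n)" for n
    unfolding f_def using assms(1) by (simp add: power_add)
  moreover have "f n = 0" if "n < l" for n
    unfolding f_def using moment_kernel_eq_0[OF assms(1) _ assms(5), of "Suc n"] that by simp
  ultimately show ?thesis
    using sums_zero_iff_shift[of l f] moment_kernel_power_series_sums[OF assms(1-4), of a] sums_mult
    unfolding f_def by fastforce
qed

lemma Mmom_generating_sums:
  fixes q z :: real and \<alpha> :: nat
  assumes "0 < q" "q < 1" "1 \<le> k" "0 < z" "z < (q\<^sup>2) ^ k"
  defines "p \<equiv> q\<^sup>2" and "a \<equiv> (q\<^sup>2) ^ \<alpha>"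
  shows "(\<lambda>n. Mmom q \<alpha> k (n + 1) * real (n + 1) * z ^ n) sums
     (q powi (- int \<alpha> * int k) / (1 - p) ^ k * qpoch (z / p ^ (k - 1)) p (k - 1)
      * (\<Sum>r\<le>k. qbinom_coeff k r p * (a * p ^ (k + 1)) ^ r / qpoch (z * p ^ r / p ^ k) p (Suc k)))"
proof -
  have p: "0 < p" "p < 1" and z: "0 < z" "z < p ^ k"
    using assms(1,2,4,5) by (auto simp: p_def power_less_one_iff)
  define C where "C = q powi (- int \<alpha> * int k) * p ^ k / ((1 - p) ^ k * qpoch p p k)"
  define K where "K = qpoch p p k / p ^ k * (\<Sum>r\<le>k. qbinom_coeff k r p * (a * p ^ (k + 1)) ^ r
        / qpoch (z * p ^ r / p ^ k) p (Suc k))"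
  have summand: "Mmom q \<alpha> k (n + 1) * real (n + 1) * z ^ n
      = C * (\<Sum>l<k. qbinom_coeff (k - 1) l p
        * (moment_kernel p a k (p ^ Suc n / p ^ l) * z ^ n))" for n
  proof -
    have "real (n + 1) * Mmom q \<alpha> k (n + 1)
        = C * (\<Sum>l<k. qbinom_coeff (k - 1) l p * moment_kernel p a k (p ^ Suc n / p ^ l))"
      using Mmom_eq_kernel_sum[of q k "n + 1" \<alpha>] assms(1-3) unfolding C_def p_def a_def by simp
    then have "Mmom q \<alpha> k (n + 1) * real (n + 1) * z ^ n
        = C * (\<Sum>l<k. qbinom_coeff (k - 1) l p * moment_kernel p a k (p ^ Suc n / p ^ l)) * z ^ n"
      by (simp only: mult.commute)
    then show ?thesis
      by (simp only: sum_distrib_right mult.assoc)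
  qed
  have "(\<lambda>n. \<Sum>l<k. qbinom_coeff (k - 1) l p * (moment_kernel p a k (p ^ Suc n / p ^ l) * z ^ n))
      sums (\<Sum>l<k. qbinom_coeff (k - 1) l p * (z ^ l * K))"
    unfolding K_def by (intro sums_sum sums_mult moment_kernel_shifted_sums[OF p z]) simp
  also have "(\<Sum>l<k. qbinom_coeff (k - 1) l p * (z ^ l * K))
      = (\<Sum>l<k. qbinom_coeff (k - 1) l p * z ^ l) * K"
    by (simp only: sum_distrib_right mult.assoc)
  also have "\<dots> = qpoch (z / p ^ (k - 1)) p (k - 1) * K"
    by (simp only: qbinomial_terminating_lessThan[OF p assms(3)])
  finally have "(\<lambda>n. C * (\<Sum>l<k. qbinom_coeff (k - 1) l p
        * (moment_kernel p a k (p ^ Suc n / p ^ l) * z ^ n)))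
      sums (C * (qpoch (z / p ^ (k - 1)) p (k - 1) * K))"
    by (rule sums_mult)
  also have "C * (qpoch (z / p ^ (k - 1)) p (k - 1) * K)
      = q powi (- int \<alpha> * int k) / (1 - p) ^ k * qpoch (z / p ^ (k - 1)) p (k - 1)
        * (\<Sum>r\<le>k. qbinom_coeff k r p * (a * p ^ (k + 1)) ^ r / qpoch (z * p ^ r / p ^ k) p (Suc k))"
    unfolding C_def K_def using qpoch_self_pos[OF p, of k] p by simp
  finally show ?thesis
    unfolding summand .
qed

section \<open>The Big q-Jacobi polynomial\<close>

lemma bigqJacobi_eq_finite_sum:
  fixes q z :: real and \<alpha> k :: nat
  assumes "0 < q"
  defines "p \<equiv> q\<^sup>2" and "a \<equiv> (q\<^sup>2) ^ \<alpha>"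
  shows "bigqJacobi k 0 (q ^ (2 * \<alpha>)) (q powi (- 2 * int \<alpha>)) (inverse z) (q\<^sup>2)
    = (\<Sum>i\<le>k. qpoch (1 / p ^ k) p i * qpoch (p ^ (k + 1)) p i
            / (qpoch (a * p) p i * qpoch (p / z) p i * qpoch p p i) * p ^ i)"
proof -
  have p: "0 < p" unfolding p_def using assms(1) by simp
  have a: "q ^ (2 * \<alpha>) = a" "a \<noteq> 0"
    unfolding a_def using assms(1) by (simp_all add: power_mult)
  have "q powi (- 2 * int \<alpha>) = q ^ 0 / q ^ (2 * \<alpha>)"
    by (rule power_int_eq_divide) (use assms(1) in simp_all)
  then have b: "q powi (- 2 * int \<alpha>) = 1 / a"
    using a by simp
  have "bigqJacobi k 0 (q ^ (2 * \<alpha>)) (q powi (- 2 * int \<alpha>)) (inverse z) (q\<^sup>2)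
     = (\<Sum>i. qpoch (1 / p ^ k) p i * qpoch (p ^ (k + 1)) p i
            / (qpoch (a * p) p i * qpoch (p / z) p i * qpoch p p i) * p ^ i)"
    unfolding bigqJacobi_def phi32_def a(1) b p_def[symmetric] using a(2)
    by (simp add: power_int_minus divide_inverse mult.commute qpoch_def)
  also have "\<dots> = (\<Sum>i\<le>k. qpoch (1 / p ^ k) p i * qpoch (p ^ (k + 1)) p i
            / (qpoch (a * p) p i * qpoch (p / z) p i * qpoch p p i) * p ^ i)"
    by (rule suminf_finite) (use p in \<open>auto simp: qpoch_eq_0[of k]\<close>)
  finally show ?thesis .
qed

lemma qpoch_p_over_z_nonzero:
  assumes "0 < p" "p < 1" "0 < z" "z < p ^ k" "n \<le> k"
  shows "qpoch (p / z) p n \<noteq> 0"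
proof (rule qpoch_nonzero)
  fix j assume "j < n"
  with assms have "p ^ k \<le> p ^ Suc j"
    by (intro power_decreasing) auto
  then have "z < p * p ^ j"
    using assms by simp
  then show "p / z * p ^ j \<noteq> 1"
    using assms by (auto simp: field_simps)
qed

lemma qpoch_scaled_z_pos:
  assumes "0 < p" "p < 1" "0 < z" "z < p ^ k" "m + n \<le> k"
  shows "qpoch (z * p ^ m / p ^ k) p n > 0"
proof (rule qpoch_pos)
  fix j assume "j < n"
  with assms have "p ^ (m + j) \<le> 1"
    by (simp add: power_le_one)
  then have "z * p ^ (m + j) < p ^ k"
    using assms mult_left_le[of "p ^ (m + j)" z] by linarith
  then show "z * p ^ m / p ^ k * p ^ j < 1"
    using assms by (simp add: power_add field_simps)
qed

lemma terminating_2phi1_eq: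
  assumes "0 < p" "p < 1" "0 < z" "z < p ^ k" "r \<le> k"
  shows "(\<Sum>i\<le>k. qpoch (1 / p ^ (k - r)) p i * qpoch (p ^ (k + 1)) p i
           / (qpoch (p / z) p i * qpoch p p i) * p ^ i)
    = qpoch (z * p ^ Suc r) p (k - r) / qpoch (z / p ^ (k - r)) p (k - r)"
proof -
  define n where "n = k - r"
  have n: "n \<le> k" unfolding n_def by simp
  have pz: "qpoch (p / z) p n \<noteq> 0"
    by (rule qpoch_p_over_z_nonzero[OF assms(1-4) n])
  have zn: "qpoch (z / p ^ n) p n \<noteq> 0"
    using qpoch_scaled_z_pos[OF assms(1-4), of "k - n" n] n assms(1) by (simp add: power_diff)
  have "(\<Sum>i\<le>k. qpoch (1 / p ^ n) p i * qpoch (p ^ (k + 1)) p i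
        / (qpoch (p / z) p i * qpoch p p i) * p ^ i)
      = (\<Sum>i\<le>n. qpoch (1 / p ^ n) p i * qpoch (p ^ (k + 1)) p i
        / (qpoch (p / z) p i * qpoch p p i) * p ^ i)"
    by (rule sum.mono_neutral_right) (use n assms(1) in \<open>auto simp: qpoch_eq_0[of n]\<close>)
  also have "\<dots> = (\<Prod>j<n. p ^ (k + 1) - p / z * p ^ j) / qpoch (p / z) p n"
    by (rule q_Chu_Vandermonde_sum[OF assms(1,2) pz])
  also have "\<dots> = qpoch (z * p ^ Suc r) p n / qpoch (z / p ^ n) p n"
  proof -
    have "1 / (p / z) = z / p" "p ^ (k + 1) / (p / z) = z * p ^ k"
      using assms(1) by simp_all
    moreover have "qpoch (z / p) (1 / p) n = qpoch (z / p ^ n) p n"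
      using qpoch_inverse_base[of p "z / p" n] assms(1) by simp
    moreover have "z * p ^ k * p / p ^ n = z * p ^ Suc r"
      using assms(1,5) unfolding n_def by (simp add: power_diff field_simps flip: power_Suc)
    then have "qpoch (z * p ^ k) (1 / p) n = qpoch (z * p ^ Suc r) p n"
      using qpoch_inverse_base[of p "z * p ^ k" n] assms(1) by simp
    ultimately have "(\<Prod>j<n. p ^ (k + 1) - p / z * p ^ j) * qpoch (z / p ^ n) p n
        = qpoch (p / z) p n * qpoch (z * p ^ Suc r) p n"
      using prod_diff_mult_qpoch_inverse_base[where c = "p / z" and p = p and n = n
        and b = "p ^ (k + 1)"]
        assms(1,3) by (simp add: ac_simps)
    then show ?thesis
      using pz zn by (simp add: field_simps)
  qed
  finally show ?thesis unfolding n_def .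
qed

lemma qpoch_quotient_expansion:
  assumes "0 < p" "p < 1" "i \<le> k" "qpoch (a * p) p i \<noteq> 0"
  shows "qpoch (a * p) p k / qpoch (a * p) p i
    = (\<Sum>r\<le>k. qbinom_coeff (k - i) r p * (a * p ^ (k + 1)) ^ r)"
proof -
  have "qpoch (a * p) p k = qpoch (a * p) p i * qpoch (a * p * p ^ i) p (k - i)"
    using qpoch_add[of "a * p" p i "k - i"] assms(3) by simp
  then have "qpoch (a * p) p k / qpoch (a * p) p i = qpoch (a * p * p ^ i) p (k - i)"
    using assms(4) by simp
  also have "a * p * p ^ i = a * p ^ (k + 1) / p ^ (k - i)"
    using assms(1,3) by (simp add: power_diff)
  also have "qpoch (a * p ^ (k + 1) / p ^ (k - i)) p (k - i)
      = (\<Sum>r\<le>k - i. qbinom_coeff (k - i) r p * (a * p ^ (k + 1)) ^ r)"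
    by (rule qbinomial_terminating[OF assms(1,2), symmetric])
  also have "\<dots> = (\<Sum>r\<le>k. qbinom_coeff (k - i) r p * (a * p ^ (k + 1)) ^ r)"
    by (rule sum.mono_neutral_left) (auto simp: qbinom_coeff_eq_0[OF assms(1)])
  finally show ?thesis .
qed

lemma bigqJacobi_sum_expansion:
  assumes "0 < p" "p < 1" "0 < z" "z < p ^ k" "0 < a" "a \<le> 1"
  shows "qpoch (a * p) p k * (\<Sum>i\<le>k. qpoch (1 / p ^ k) p i * qpoch (p ^ (k + 1)) p i
            / (qpoch (a * p) p i * qpoch (p / z) p i * qpoch p p i) * p ^ i)
    = (\<Sum>r\<le>k. qbinom_coeff k r p * (a * p ^ (k + 1)) ^ r
          * (qpoch (z * p ^ Suc r) p (k - r) / qpoch (z / p ^ (k - r)) p (k - r)))"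
proof -
  define V where "V i = qpoch (p ^ (k + 1)) p i / (qpoch (p / z) p i * qpoch p p i) * p ^ i" for i
  define X where "X r = qbinom_coeff k r p * (a * p ^ (k + 1)) ^ r" for r
  have ap: "qpoch (a * p) p i \<noteq> 0" for i
  proof (rule qpoch_nonzero)
    fix j
    have "a * (p * p ^ j) \<le> p * p ^ j"
      using assms by (intro mult_left_le_one_le) auto
    then show "a * p * p ^ j \<noteq> 1"
      using power_Suc_less_one[OF assms(1,2), of j] by (auto simp: mult.assoc)
  qed
  have "qpoch (a * p) p k * (\<Sum>i\<le>k. qpoch (1 / p ^ k) p i * qpoch (p ^ (k + 1)) p i
            / (qpoch (a * p) p i * qpoch (p / z) p i * qpoch p p i) * p ^ i)
      = (\<Sum>i\<le>k. qpoch (1 / p ^ k) p i * V i * (qpoch (a * p) p k / qpoch (a * p) p i))"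
    unfolding sum_distrib_left V_def by (rule sum.cong[OF refl]) (simp add: field_simps)
  also have "\<dots> = (\<Sum>i\<le>k. \<Sum>r\<le>k. qpoch (1 / p ^ k) p i * qbinom_coeff (k - i) r p
        * (a * p ^ (k + 1)) ^ r * V i)"
    by (rule sum.cong[OF refl]) (simp add: qpoch_quotient_expansion[OF assms(1,2) _ ap]
      sum_distrib_left mult_ac)
  also have "\<dots> = (\<Sum>i\<le>k. \<Sum>r\<le>k. X r * (qpoch (1 / p ^ (k - r)) p i * V i))"
  proof (intro sum.cong refl)
    fix i r assume "i \<in> {..k}" "r \<in> {..k}"
    then show "qpoch (1 / p ^ k) p i * qbinom_coeff (k - i) r p * (a * p ^ (k + 1)) ^ r * V i
        = X r * (qpoch (1 / p ^ (k - r)) p i * V i)"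
      using qpoch_times_qbinom_coeff[OF assms(1), of i k r] by (simp add: X_def mult_ac)
  qed
  also have "\<dots> = (\<Sum>r\<le>k. X r * (\<Sum>i\<le>k. qpoch (1 / p ^ (k - r)) p i * V i))"
    unfolding sum_distrib_left by (rule sum.swap)
  also have "\<dots> = (\<Sum>r\<le>k. X r * (qpoch (z * p ^ Suc r) p (k - r)
        / qpoch (z / p ^ (k - r)) p (k - r)))"
    unfolding V_def using terminating_2phi1_eq[OF assms(1-4)] by (simp add: mult.assoc)
  finally show ?thesis unfolding X_def .
qed

section \<open>The closed form\<close>

lemma generating_factor_eq:
  assumes "0 < p" "p < 1" "0 < z" "z < p ^ k" "1 \<le> k" "r \<le> k"
  shows "(1 - z)\<^sup>2 * qpoch (z / p ^ (k - 1)) p (k - 1) / qpoch (z * p ^ r / p ^ k) p (Suc k)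
    = qpoch z (1 / p) k / qpoch (z * p) p k
      * (qpoch (z * p ^ Suc r) p (k - r) / qpoch (z / p ^ (k - r)) p (k - r))"
proof -
  define n where "n = k - r"
  have k: "k = r + n" "Suc k = n + Suc r"
    using assms(6) unfolding n_def by simp_all
  have z1: "z < 1"
    using assms(1-4) power_le_one[of p k] by linarith
  have zn: "z * p ^ r / p ^ k = z / p ^ n"
    using assms(1,6) unfolding n_def by (simp add: power_diff)
  have D: "qpoch (z / p ^ n) p (Suc k) = qpoch (z / p ^ n) p n * ((1 - z) * qpoch (z * p) p r)"
    using qpoch_add[of "z / p ^ n" p n "Suc r"] assms(1)
    unfolding k(2) by (simp add: qpoch_Suc_left)
  have E: "qpoch (z * p) p k = qpoch (z * p) p r * qpoch (z * p ^ Suc r) p n"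
    using qpoch_add[of "z * p" p r n] unfolding k(1) by (simp add: mult.assoc)
  have F: "qpoch z (1 / p) k = (1 - z) * qpoch (z / p ^ (k - 1)) p (k - 1)"
  proof -
    obtain m where m: "k = Suc m" using assms(5) by (cases k) auto
    have "qpoch z (1 / p) k = qpoch (z / p ^ m) p (Suc m)"
      using qpoch_inverse_base[of p z k] assms(1) unfolding m by simp
    also have "\<dots> = (1 - z) * qpoch (z / p ^ m) p m"
      using assms(1) by (simp add: qpoch_Suc)
    finally show ?thesis
      unfolding m by simp
  qed
  have "qpoch (z * p) p k > 0"
  proof (rule qpoch_pos)
    fix j
    have "z * (p * p ^ j) \<le> z"
      using assms(1-3) by (intro mult_left_le) (auto simp: power_le_one mult_le_one)
    then show "z * p * p ^ j < 1"
      using z1 by (simp add: mult.assoc)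
  qed
  then have "qpoch (z * p) p r \<noteq> 0" "qpoch (z * p ^ Suc r) p n \<noteq> 0"
    unfolding E by auto
  moreover have "qpoch (z / p ^ n) p n \<noteq> 0"
    using qpoch_scaled_z_pos[OF assms(1-4), of r n] zn k(1) by simp
  ultimately show ?thesis
    unfolding zn D E F n_def[symmetric] using z1 by (simp add: power2_eq_square field_simps)
qed

lemma Mgen_eq_sum:
  fixes q z :: real and \<alpha> :: nat
  assumes "0 < q" "q < 1" "1 \<le> k" "0 < z" "z < (q\<^sup>2) ^ k"
  defines "p \<equiv> q\<^sup>2" and "a \<equiv> (q\<^sup>2) ^ \<alpha>"
  shows "Mgen k z \<alpha> q = q powi (- int \<alpha> * int k) / (1 - p) ^ k
      * (qpoch z (1 / p) k / qpoch (z * p) p k)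
      * (\<Sum>r\<le>k. qbinom_coeff k r p * (a * p ^ (k + 1)) ^ r
          * (qpoch (z * p ^ Suc r) p (k - r) / qpoch (z / p ^ (k - r)) p (k - r)))"
proof -
  have p: "0 < p" "p < 1" and z: "0 < z" "z < p ^ k"
    using assms(1,2,4,5) by (auto simp: p_def power_less_one_iff)
  define C where "C = q powi (- int \<alpha> * int k) / (1 - p) ^ k"
  have "Mgen k z \<alpha> q = (1 - z)\<^sup>2 * (C * qpoch (z / p ^ (k - 1)) p (k - 1)
      * (\<Sum>r\<le>k. qbinom_coeff k r p * (a * p ^ (k + 1)) ^ r / qpoch (z * p ^ r / p ^ k) p (Suc k)))"
    unfolding Mgen_def C_def p_def a_def
    using sums_unique[OF sums_mult[OF Mmom_generating_sums[OF assms(1-5)], of "(1 - z)\<^sup>2"]]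
    by (simp add: mult_ac)
  also have "\<dots> = C * (\<Sum>r\<le>k. qbinom_coeff k r p * (a * p ^ (k + 1)) ^ r
      * ((1 - z)\<^sup>2 * qpoch (z / p ^ (k - 1)) p (k - 1) / qpoch (z * p ^ r / p ^ k) p (Suc k)))"
    by (simp add: sum_distrib_left mult_ac)
  also have "\<dots> = C * (qpoch z (1 / p) k / qpoch (z * p) p k)
      * (\<Sum>r\<le>k. qbinom_coeff k r p * (a * p ^ (k + 1)) ^ r
      * (qpoch (z * p ^ Suc r) p (k - r) / qpoch (z / p ^ (k - r)) p (k - r)))"
  proof -
    have "(\<Sum>r\<le>k. qbinom_coeff k r p * (a * p ^ (k + 1)) ^ r
        * ((1 - z)\<^sup>2 * qpoch (z / p ^ (k - 1)) p (k - 1) / qpoch (z * p ^ r / p ^ k) p (Suc k)))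
      = (\<Sum>r\<le>k. qbinom_coeff k r p * (a * p ^ (k + 1)) ^ r
        * (qpoch z (1 / p) k / qpoch (z * p) p k
           * (qpoch (z * p ^ Suc r) p (k - r) / qpoch (z / p ^ (k - r)) p (k - r))))"
      by (intro sum.cong refl) (simp only: generating_factor_eq[OF p z assms(3)] atMost_iff)
    then show ?thesis
      by (simp add: sum_distrib_left mult_ac)
  qed
  finally show ?thesis unfolding C_def .
qed

theorem mainTheorem6:
  fixes q z :: real and \<alpha> k :: nat
  assumes "0 < q" "q < 1" "1 \<le> k" "0 < z" "z < q ^ (2 * k)"
  shows "Mgen k z \<alpha> q =
    qfact (q\<^sup>2) (k + \<alpha>) / qfact (q\<^sup>2) \<alpha>
    * (qpoch z (q powi (-2)) k / qpoch (z * q\<^sup>2) (q\<^sup>2) k)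
    * q powi (- int \<alpha> * int k)
    * bigqJacobi k 0 (q ^ (2 * \<alpha>)) (q powi (- 2 * int \<alpha>)) (inverse z) (q\<^sup>2)"
proof -
  define p where "p = q\<^sup>2"
  define a where "a = (q\<^sup>2) ^ \<alpha>"
  have p: "0 < p" "p < 1" and z: "0 < z" "z < p ^ k" and a: "0 < a" "a \<le> 1"
    using assms by (auto simp: p_def a_def power_less_one_iff power_le_one power_mult)
  have "q powi (-2) = q ^ 0 / q ^ 2"
    by (rule power_int_eq_divide) (use assms(1) in simp_all)
  then have "q powi (-2) = 1 / p"
    unfolding p_def by simp
  moreover have "qfact p (k + \<alpha>) / qfact p \<alpha> = qpoch (a * p) p k / (1 - p) ^ k"
    using qfact_quotient[OF p] unfolding a_def p_def .
  moreover have "qpoch (a * p) p k * bigqJacobi k 0 (q ^ (2 * \<alpha>)) (q powi (- 2 * int \<alpha>))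
      (inverse z) p
      = (\<Sum>r\<le>k. qbinom_coeff k r p * (a * p ^ (k + 1)) ^ r
          * (qpoch (z * p ^ Suc r) p (k - r) / qpoch (z / p ^ (k - r)) p (k - r)))"
    using bigqJacobi_sum_expansion[OF p z a]
      bigqJacobi_eq_finite_sum[OF assms(1), of k \<alpha> z, folded a_def p_def]
    by simp
  ultimately show ?thesis
    unfolding Mgen_eq_sum[OF assms(1-4) z(2)[unfolded p_def]] p_def[symmetric]
    by (simp add: a_def p_def mult_ac)
qed

end
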